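(* Let $(q_i)_{i\in\mathbb Z}$ be complex numbers, $T=(T_{ij})_{i,j\ge0}$ the infinite Toeplitz matrix with $T_{ij}=q_{i-j}$, and $T(w)=\sum_{i\in\mathbb Z}q_iw^i$ its symbol. Assume $T(w)$ converges absolutely on the annulus $\{1<|w|<1+\varepsilon\}$ for some $\varepsilon>0$. Then, as formal power series in $1/z$, $$(z-T)^{-1}_{00}:=\sum_{k\ge0}\frac{(T^k)_{00}}{z^{k+1}}=\exp\left(-\frac1{2\pi\mathrm i}\oint_{|w|=1+\varepsilon/2}\ln\big(z-T(w)\big)\frac{dw}w\right),$$ where $\ln(z-T(w))=\ln z-\sum_{k\ge1}\frac{T(w)^k}{kz^k}$. *)

theory Defs
  imports "HOL-Complex_Analysis.Complex_Analysis" "HOL-Computational_Algebra.Formal_Power_Series"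
begin

definition toeplitz :: "(int \<Rightarrow> complex) \<Rightarrow> nat \<Rightarrow> nat \<Rightarrow> complex" where
  "toeplitz q i j = q (int i - int j)"

fun toeplitz_pow :: "(int \<Rightarrow> complex) \<Rightarrow> nat \<Rightarrow> nat \<Rightarrow> nat \<Rightarrow> complex" where
  "toeplitz_pow q 0 i j = (if i = j then 1 else 0)"
| "toeplitz_pow q (Suc k) i j = (\<Sum>\<^sub>\<infinity>l. toeplitz q i l * toeplitz_pow q k l j)"

definition symbol :: "(int \<Rightarrow> complex) \<Rightarrow> complex \<Rightarrow> complex" where
  "symbol q w = (\<Sum>\<^sub>\<infinity>i. q i * power_int w i)"

text \<open>With x = 1/z: ln z - ln(z - T(w)) = sum over k >= 1 of T(w)^k x^k / k, as a formal power series in x.\<close>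
definition log_part :: "(int \<Rightarrow> complex) \<Rightarrow> complex \<Rightarrow> complex fps" where
  "log_part q w = Abs_fps (\<lambda>n. if n = 0 then 0 else symbol q w ^ n / of_nat n)"

definition fps_circle_avg :: "real \<Rightarrow> (complex \<Rightarrow> complex fps) \<Rightarrow> complex fps" where
  "fps_circle_avg r F = Abs_fps (\<lambda>n. contour_integral (circlepath 0 r) (\<lambda>w. fps_nth (F w) n / w) / (2 * pi * \<i>))"

end

theory Submission
  imports Defs
begin

text \<open>Expanding the matrix products, \<open>(T\<^sup>k)\<^sub>0\<^sub>0\<close> is the sum of the weights
  \<open>q\<^sub>s\<^sub>1 \<cdots> q\<^sub>s\<^sub>k\<close> of excursions: step sequences with total sum \<open>0\<close> all of whose
  partial sums are \<open>\<le> 0\<close>. Call a step sequence with total sum \<open>0\<close> a bridge. Marking one of the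
  \<open>n\<close> steps of an excursion, cutting it at the last return to \<open>0\<close> before the mark and rotating
  the rest at the mark (the cycle lemma) is a weight-preserving bijection onto pairs of a bridge
  of length \<open>m \<ge> 1\<close> and an excursion of length \<open>n - m\<close>. So \<open>n E\<^sub>n = \<Sum>\<^sub>m B\<^sub>m E\<^sub>n\<^sub>-\<^sub>m\<close>, i.e.
  \<open>E' = E L'\<close> for \<open>L = \<Sum> B\<^sub>n x\<^sup>n / n\<close>, whence \<open>E = exp L\<close>. Finally \<open>B\<^sub>n\<close> is the constant
  Laurent coefficient of \<open>T(w)\<^sup>n\<close>, which the contour integral \<open>(2\<pi>i)\<^sup>-\<^sup>1 \<oint> T(w)\<^sup>n dw/w\<close>
  extracts, so \<open>L\<close> is the contour average of \<open>ln z - ln (z - T(w))\<close> in \<open>x = 1/z\<close>.\<close>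

section \<open>Absolutely summable products\<close>

lemma abs_summable_on_times:
  fixes f :: "'a \<Rightarrow> 'c::{real_normed_div_algebra,banach,second_countable_topology}"
    and g :: "'b \<Rightarrow> 'c"
  assumes f: "(\<lambda>x. norm (f x)) summable_on A" and g: "(\<lambda>y. norm (g y)) summable_on B"
  shows "(\<lambda>(x, y). norm (f x * g y)) summable_on A \<times> B"
proof -
  have "(\<lambda>p. norm ((\<lambda>(x, y). f x * g y) p)) summable_on Sigma A (\<lambda>_. B)"
    unfolding Infinite_Sum.abs_summable_on_Sigma_iff[where f = "\<lambda>(x, y). f x * g y"]
  proof (intro conjI ballI)
    show "(\<lambda>y. norm (case (x, y) of (x, y) \<Rightarrow> f x * g y)) summable_on B" for x
      using summable_on_cmult_right[OF g, of "norm (f x)"] by (simp add: norm_mult)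
    have "(\<lambda>x. norm (f x) * (\<Sum>\<^sub>\<infinity>y\<in>B. norm (g y))) summable_on A"
      using f by (rule summable_on_cmult_left)
    then show "(\<lambda>x. norm (\<Sum>\<^sub>\<infinity>y\<in>B. norm (case (x, y) of (x, y) \<Rightarrow> f x * g y))) summable_on A"
      by (simp add: norm_mult infsum_cmult_right' infsum_nonneg)
  qed
  then show ?thesis
    by (simp add: case_prod_unfold)
qed

lemma infsum_times:
  fixes f :: "'a \<Rightarrow> 'c::{real_normed_div_algebra,banach,second_countable_topology}"
    and g :: "'b \<Rightarrow> 'c"
  assumes "(\<lambda>x. norm (f x)) summable_on A" and "(\<lambda>y. norm (g y)) summable_on B"
  shows "(\<Sum>\<^sub>\<infinity>(x, y)\<in>A \<times> B. f x * g y) = infsum f A * infsum g B"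
proof -
  have "(\<lambda>(x, y). f x * g y) summable_on A \<times> B"
    using abs_summable_on_times[OF assms] abs_summable_summable
    by (simp add: case_prod_unfold)
  then have "(\<Sum>\<^sub>\<infinity>(x, y)\<in>A \<times> B. f x * g y) = (\<Sum>\<^sub>\<infinity>x\<in>A. \<Sum>\<^sub>\<infinity>y\<in>B. f x * g y)"
    by (simp add: infsum_Sigma'_banach)
  then show ?thesis
    by (simp add: infsum_cmult_right' infsum_cmult_left')
qed

lemma lists_length_Suc_eq_image:
  "{xs. length xs = Suc k} = (\<lambda>(x, xs). x # xs) ` (UNIV \<times> {xs. length xs = k})"
  by (auto simp: image_def length_Suc_conv)

lemma abs_summable_on_prod_list_lists:
  fixes f :: "'a \<Rightarrow> 'c::{real_normed_div_algebra,banach,second_countable_topology}"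
  assumes f: "(\<lambda>x. norm (f x)) summable_on UNIV"
  shows "(\<lambda>xs. norm (prod_list (map f xs))) summable_on {xs. length xs = k}"
proof (induction k)
  case (Suc k)
  have inj: "inj_on (\<lambda>(x, xs). x # xs) (UNIV \<times> {xs::'a list. length xs = k})"
    by (auto simp: inj_on_def)
  show ?case
    using abs_summable_on_times[OF f Suc.IH]
    unfolding lists_length_Suc_eq_image summable_on_reindex[OF inj]
    by (simp add: o_def case_prod_unfold)
qed simp

lemma infsum_prod_list_lists:
  fixes f :: "'a \<Rightarrow> 'c::{real_normed_div_algebra,banach,second_countable_topology}"
  assumes f: "(\<lambda>x. norm (f x)) summable_on UNIV"
  shows "(\<Sum>\<^sub>\<infinity>xs\<in>{xs. length xs = k}. prod_list (map f xs)) = infsum f UNIV ^ k"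
proof (induction k)
  case (Suc k)
  have inj: "inj_on (\<lambda>(x, xs). x # xs) (UNIV \<times> {xs::'a list. length xs = k})"
    by (auto simp: inj_on_def)
  show ?case
    using infsum_times[OF f abs_summable_on_prod_list_lists[OF f]] Suc.IH
    unfolding lists_length_Suc_eq_image infsum_reindex[OF inj]
    by (simp add: o_def case_prod_unfold)
qed simp

section \<open>Lattice paths and powers of the Toeplitz matrix\<close>

definition path_weight :: "(int \<Rightarrow> 'a::monoid_mult) \<Rightarrow> int list \<Rightarrow> 'a" where
  "path_weight q d = prod_list (map q d)"

lemma path_weight_simps [simp]:
  "path_weight q [] = 1"
  "path_weight q (x # xs) = q x * path_weight q xs"
  "path_weight q (xs @ ys) = path_weight q xs * path_weight q ys"
  by (simp_all add: path_weight_def)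

lemma prod_list_weighted_power_int:
  fixes w :: "'a::field"
  assumes "w \<noteq> 0"
  shows "prod_list (map (\<lambda>i. q i * power_int w i) d) = path_weight q d * power_int w (sum_list d)"
  by (induction d) (auto simp: power_int_add assms)

lemma abs_summable_path_weight_fixed_sum:
  fixes w :: complex
  assumes w: "w \<noteq> 0" and q: "(\<lambda>i. norm (q i * power_int w i)) summable_on UNIV"
  shows "(\<lambda>d. norm (path_weight q d)) summable_on {d. length d = k \<and> sum_list d = s}"
proof -
  let ?S = "{d. length d = k \<and> sum_list d = s}"
  have "(\<lambda>d. norm (prod_list (map (\<lambda>i. q i * power_int w i) d))) summable_on ?S"
    using abs_summable_on_prod_list_lists[OF q, of k] by (rule summable_on_subset_banach) auto
  then have "(\<lambda>d. norm (prod_list (map (\<lambda>i. q i * power_int w i) d)) * norm (power_int w (- s)))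
      summable_on ?S"
    by (rule summable_on_cmult_left)
  then show ?thesis
    by (rule summable_on_cong[THEN iffD1, rotated])
      (simp add: prod_list_weighted_power_int[OF w] norm_mult norm_power_int power_int_minus
        norm_inverse w)
qed

text \<open>A step \<open>s\<close> leads from height \<open>h\<close> to \<open>h - s\<close>, matching \<open>T\<^sub>i\<^sub>l = q (i - l)\<close>;
  a walk from \<open>i\<close> is admissible if it never goes below height \<open>0\<close>.\<close>
definition walks :: "nat \<Rightarrow> nat \<Rightarrow> nat \<Rightarrow> int list set" where
  "walks k i j = {d. length d = k \<and> int i - sum_list d = int j \<and> (\<forall>t. sum_list (take t d) \<le> int i)}"

lemma walks_0: "walks 0 i j = (if i = j then {[]} else {})"
  by (auto simp: walks_def)

lemma bij_betw_walks_Suc: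
  "bij_betw (\<lambda>(l, d). (int i - int l) # d) (SIGMA l:UNIV. walks k l j) (walks (Suc k) i j)"
proof (rule bij_betw_byWitness[where f' = "\<lambda>d. (nat (int i - hd d), tl d)"])
  show "(\<lambda>(l, d). (int i - int l) # d) ` (SIGMA l:UNIV. walks k l j) \<subseteq> walks (Suc k) i j"
  proof clarify
    fix l d assume d: "d \<in> walks k l j"
    have "sum_list (take t ((int i - int l) # d)) \<le> int i" for t
      using d by (cases t) (auto simp: walks_def)
    then show "(int i - int l) # d \<in> walks (Suc k) i j"
      using d by (auto simp: walks_def)
  qed
  show "(\<lambda>d. (nat (int i - hd d), tl d)) ` walks (Suc k) i j \<subseteq> (SIGMA l:UNIV. walks k l j)"
  proof (rule image_subsetI)
    fix d assume d: "d \<in> walks (Suc k) i j"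
    then obtain x d' where d': "d = x # d'" by (cases d) (auto simp: walks_def)
    have bound: "x + sum_list (take t d') \<le> int i" for t
      using d by (auto simp: walks_def d' dest: spec[of _ "Suc t"])
    have tail: "sum_list (take t d') \<le> int i - x" for t
      using bound[of t] by simp
    have "x \<le> int i"
      using bound[of 0] by simp
    then show "(nat (int i - hd d), tl d) \<in> (SIGMA l:UNIV. walks k l j)"
      using d tail unfolding d' walks_def by auto
  qed
qed (auto simp: walks_def length_Suc_conv dest: spec[of _ "Suc 0"])

lemma toeplitz_pow_eq_infsum_walks:
  fixes w :: complex
  assumes w: "w \<noteq> 0" and q: "(\<lambda>i. norm (q i * power_int w i)) summable_on UNIV"
  shows "toeplitz_pow q k i j = infsum (path_weight q) (walks k i j)"
proof (induction k arbitrary: i)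
  case 0
  then show ?case by (simp add: walks_0)
next
  case (Suc k)
  let ?f = "\<lambda>l d. q (int i - int l) * path_weight q d"
  note bij = bij_betw_walks_Suc[of i k j]
  have "path_weight q summable_on walks (Suc k) i j"
    by (rule abs_summable_summable, rule summable_on_subset_banach
        [OF abs_summable_path_weight_fixed_sum[OF w q, of "Suc k" "int i - int j"]])
      (auto simp: walks_def)
  then have "(\<lambda>(l, d). ?f l d) summable_on (SIGMA l:UNIV. walks k l j)"
    using summable_on_reindex_bij_betw[OF bij, of "path_weight q"] by (simp add: case_prod_unfold)
  then have "(\<Sum>\<^sub>\<infinity>l. \<Sum>\<^sub>\<infinity>d\<in>walks k l j. ?f l d)
      = (\<Sum>\<^sub>\<infinity>(l, d)\<in>(SIGMA l:UNIV. walks k l j). ?f l d)"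
    by (rule infsum_Sigma'_banach)
  also have "\<dots> = infsum (path_weight q) (walks (Suc k) i j)"
    using infsum_reindex_bij_betw[OF bij, of "path_weight q"] by (simp add: case_prod_unfold)
  finally show ?case
    by (simp add: Suc.IH toeplitz_def infsum_cmult_right')
qed

section \<open>The cycle lemma\<close>

abbreviation psum :: "int list \<Rightarrow> nat \<Rightarrow> int" where
  "psum d j \<equiv> sum_list (take j d)"

lemma psum_append: "psum (xs @ ys) j = psum xs j + psum ys (j - length xs)"
  by simp

lemma psum_drop: "psum (drop a e) k = psum e (a + k) - psum e a"
  by (simp add: take_add)

lemma psum_take: "psum (take a e) j = psum e (min j a)"
  by (simp add: min.commute)

definition excursions :: "nat \<Rightarrow> int list set" where
  "excursions n = {d. length d = n \<and> sum_list d = 0 \<and> (\<forall>t. psum d t \<le> 0)}"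

definition bridges :: "nat \<Rightarrow> int list set" where
  "bridges n = {d. length d = n \<and> sum_list d = 0}"

lemma walks_0_0: "walks n 0 0 = excursions n"
  by (auto simp: walks_def excursions_def)

lemma excursions_0: "excursions 0 = {[]}"
  by (auto simp: excursions_def)

definition last_zero :: "int list \<Rightarrow> nat \<Rightarrow> nat" where
  "last_zero e t = Max {j. j \<le> t \<and> psum e j = 0}"

lemma last_zero:
  shows "last_zero e t \<le> t" "psum e (last_zero e t) = 0"
    and "\<And>j. last_zero e t < j \<Longrightarrow> j \<le> t \<Longrightarrow> psum e j \<noteq> 0"
proof -
  let ?A = "{j. j \<le> t \<and> psum e j = 0}"
  have fin: "finite ?A" by (rule finite_subset[of _ "{..t}"]) auto
  have "last_zero e t \<in> ?A" unfolding last_zero_def using fin by (intro Max_in) auto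
  then show "last_zero e t \<le> t" "psum e (last_zero e t) = 0" by auto
  fix j assume "last_zero e t < j" "j \<le> t"
  then show "psum e j \<noteq> 0"
    using Max_ge[OF fin, of j] unfolding last_zero_def by fastforce
qed

lemma last_zero_eqI:
  assumes "a \<le> t" "psum e a = 0" "\<And>j. a < j \<Longrightarrow> j \<le> t \<Longrightarrow> psum e j \<noteq> 0"
  shows "last_zero e t = a"
  unfolding last_zero_def
proof (rule Max_eqI)
  show "finite {j. j \<le> t \<and> psum e j = 0}" by (rule finite_subset[of _ "{..t}"]) auto
qed (use assms in \<open>auto simp: not_less[symmetric]\<close>)

definition last_argmax :: "int list \<Rightarrow> nat" where
  "last_argmax b = Max {j. 1 \<le> j \<and> j \<le> length b \<and> (\<forall>i. psum b i \<le> psum b j)}"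

lemma last_argmax:
  assumes "b \<noteq> []" "sum_list b = 0"
  shows "1 \<le> last_argmax b" "last_argmax b \<le> length b" "\<And>i. psum b i \<le> psum b (last_argmax b)"
    and "\<And>i. last_argmax b < i \<Longrightarrow> i \<le> length b \<Longrightarrow> psum b i < psum b (last_argmax b)"
proof -
  let ?A = "{j. 1 \<le> j \<and> j \<le> length b \<and> (\<forall>i. psum b i \<le> psum b j)}"
  have fin: "finite ?A" by (rule finite_subset[of _ "{..length b}"]) auto
  have "Max (psum b ` {..length b}) \<in> psum b ` {..length b}" by (intro Max_in) auto
  then obtain j0 where j0: "j0 \<le> length b" "psum b j0 = Max (psum b ` {..length b})"
    by (auto simp: image_iff)
  have max: "psum b i \<le> psum b j0" for i
  proof -
    have "psum b i = psum b (min i (length b))" by (simp add: min_def)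
    also have "\<dots> \<le> Max (psum b ` {..length b})" by (intro Max_ge finite_imageI imageI) auto
    finally show ?thesis using j0 by simp
  qed
  \<comment> \<open>since \<open>psum b 0 = psum b (length b) = 0\<close>, a maximum is also attained at a position \<open>\<ge> 1\<close>\<close>
  have "(if j0 = 0 then length b else j0) \<in> ?A"
    using max assms j0(1) by (auto simp: Suc_le_eq)
  then have "last_argmax b \<in> ?A" unfolding last_argmax_def using fin by (intro Max_in) auto
  then show "1 \<le> last_argmax b" "last_argmax b \<le> length b" "\<And>i. psum b i \<le> psum b (last_argmax b)"
    by auto
  fix i assume i: "last_argmax b < i" "i \<le> length b"
  show "psum b i < psum b (last_argmax b)"
  proof (rule ccontr)
    assume "\<not> psum b i < psum b (last_argmax b)"
    then have "psum b k \<le> psum b i" for k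
      using \<open>last_argmax b \<in> ?A\<close> by (auto dest!: spec[of _ k])
    then have "i \<in> ?A" using i by simp
    then have "i \<le> last_argmax b" unfolding last_argmax_def using fin by (rule Max_ge[rotated])
    with i show False by simp
  qed
qed

lemma last_argmax_eqI:
  assumes "1 \<le> c" "c \<le> length b" "\<And>i. psum b i \<le> psum b c"
    and "\<And>i. c < i \<Longrightarrow> i \<le> length b \<Longrightarrow> psum b i < psum b c"
  shows "last_argmax b = c"
  unfolding last_argmax_def
proof (rule Max_eqI)
  show "finite {j. 1 \<le> j \<and> j \<le> length b \<and> (\<forall>i. psum b i \<le> psum b j)}"
    by (rule finite_subset[of _ "{..length b}"]) auto
  show "c \<in> {j. 1 \<le> j \<and> j \<le> length b \<and> (\<forall>i. psum b i \<le> psum b j)}"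
    using assms by auto
  fix y assume "y \<in> {j. 1 \<le> j \<and> j \<le> length b \<and> (\<forall>i. psum b i \<le> psum b j)}"
  then have "psum b c \<le> psum b y" "y \<le> length b" by auto
  then show "y \<le> c"
    using assms(4)[of y] by (cases "c < y") auto
qed

lemma take_append_take_drop_append_drop:
  assumes "a \<le> t"
  shows "take a xs @ take (t - a) (drop a xs) @ drop t xs = xs"
  using assms by (metis append.assoc append_take_drop_id le_add_diff_inverse take_add)

text \<open>With \<open>a\<close> the last zero of the partial sums of \<open>e\<close> at or before the mark \<open>t\<close>, the excursion
  \<open>e = e' @ y @ x\<close> with \<open>|e'| = a\<close> and \<open>|e' @ y| = t\<close> is sent to the bridge \<open>x @ y\<close> and the
  excursion \<open>e'\<close>; the inverse finds the cut between \<open>x\<close> and \<open>y\<close> as the last maximum of the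
  partial sums of the bridge.\<close>
definition cut_excursion :: "nat \<Rightarrow> int list \<times> nat \<Rightarrow> nat \<times> int list \<times> int list" where
  "cut_excursion n = (\<lambda>(e, t). (n - last_zero e t,
     drop t e @ take (t - last_zero e t) (drop (last_zero e t) e), take (last_zero e t) e))"

definition glue_excursion :: "nat \<Rightarrow> nat \<times> int list \<times> int list \<Rightarrow> int list \<times> nat" where
  "glue_excursion n = (\<lambda>(m, b, e'). (e' @ drop (last_argmax b) b @ take (last_argmax b) b,
     (n - m) + (m - last_argmax b)))"

definition bridge_excursion_pairs :: "nat \<Rightarrow> (nat \<times> int list \<times> int list) set" where
  "bridge_excursion_pairs n = (SIGMA m:{1..n}. bridges m \<times> excursions (n - m))"

lemma rotated_excursion_bridge:
  assumes e: "e \<in> excursions n" and t: "t < n"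
  defines "a \<equiv> last_zero e t"
  defines "b \<equiv> drop t e @ take (t - a) (drop a e)"
  shows "b \<in> bridges (n - a)" and "last_argmax b = n - t"
proof -
  have le: "length e = n" and se: "sum_list e = 0" and pe: "\<And>j. psum e j \<le> 0"
    using e by (auto simp: excursions_def)
  have at: "a \<le> t" and pa: "psum e a = 0" and pneg: "\<And>j. a < j \<Longrightarrow> j \<le> t \<Longrightarrow> psum e j < 0"
    using last_zero[of e t] pe unfolding a_def by (auto simp: order.order_iff_strict)
  have lb: "length b = n - a"
    using le t at by (simp add: b_def)
  have psb: "psum b i = psum e (t + i) - psum e t + psum e (a + min (i - (n - t)) (t - a))" for i
    using le t by (simp only: b_def psum_append psum_drop psum_take pa) simp
  have max_at: "psum b (n - t) = - psum e t"
    using psb[of "n - t"] le t pa by (simp add: se)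
  show "b \<in> bridges (n - a)"
    using psb[of "n - a"] lb max_at le t at by (simp add: bridges_def se)
  show "last_argmax b = n - t"
  proof (rule last_argmax_eqI)
    show "psum b i \<le> psum b (n - t)" for i
      using psb[of i] max_at pe[of "t + i"] pe[of "a + min (i - (n - t)) (t - a)"] by simp
    show "psum b i < psum b (n - t)" if "n - t < i" "i \<le> length b" for i
    proof -
      have "psum e (t + i) = 0" using that le by (simp add: se)
      moreover have "psum e (a + min (i - (n - t)) (t - a)) < 0"
        using that lb at t by (intro pneg) auto
      ultimately show ?thesis using psb[of i] max_at by simp
    qed
  qed (use t at lb in auto)
qed

lemma glued_excursion:
  assumes b: "b \<in> bridges m" and m: "1 \<le> m" "m \<le> n" and e': "e' \<in> excursions (n - m)"
  defines "c \<equiv> last_argmax b"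
  defines "e \<equiv> e' @ drop c b @ take c b"
  shows "e \<in> excursions n" and "last_zero e ((n - m) + (m - c)) = n - m"
proof -
  have lb: "length b = m" and sb: "sum_list b = 0" using b by (auto simp: bridges_def)
  have le': "length e' = n - m" and se': "sum_list e' = 0" and pe': "\<And>j. psum e' j \<le> 0"
    using e' by (auto simp: excursions_def)
  have "b \<noteq> []" using lb m by auto
  then have c1: "1 \<le> c" "c \<le> m" and c2: "\<And>i. psum b i \<le> psum b c"
    and c3: "\<And>i. c < i \<Longrightarrow> i \<le> m \<Longrightarrow> psum b i < psum b c"
    using last_argmax[OF _ sb] lb unfolding c_def by auto
  have psr: "psum (drop c b @ take c b) k = psum b (c + k) - psum b c + psum b (min (k - (m - c)) c)" for k
    using lb c1 by (simp only: psum_append psum_drop psum_take) simp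
  have psr_le: "psum (drop c b @ take c b) k \<le> 0" for k
  proof (cases "k \<le> m - c")
    case True
    then show ?thesis using psr[of k] c2[of "c + k"] by simp
  next
    case False
    then have "psum b (c + k) = 0" using lb sb by simp
    then show ?thesis using psr[of k] c2[of "min (k - (m - c)) c"] by simp
  qed
  have pse: "psum e j = psum e' j + psum (drop c b @ take c b) (j - (n - m))" for j
    unfolding e_def psum_append[where xs = e'] le' by simp
  have "psum e j \<le> 0" for j
    using pse[of j] pe'[of j] psr_le[of "j - (n - m)"] by simp
  moreover have "sum_list (drop c b) + sum_list (take c b) = 0"
    using sb by (metis append_take_drop_id sum_list_append add.commute)
  ultimately show "e \<in> excursions n"
    using le' lb c1 m se' by (simp add: excursions_def e_def)
  show "last_zero e ((n - m) + (m - c)) = n - m"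
  proof (rule last_zero_eqI)
    show "psum e (n - m) = 0" using pse[of "n - m"] le' se' by simp
    fix j assume j: "n - m < j" "j \<le> (n - m) + (m - c)"
    have "psum e j = psum b (c + (j - (n - m))) - psum b c"
      using pse[of j] psr[of "j - (n - m)"] le' se' j by simp
    also have "\<dots> < 0" using c3[of "c + (j - (n - m))"] j c1 by simp
    finally show "psum e j \<noteq> 0" by simp
  qed simp
qed

lemma cut_excursion_inverse:
  assumes e: "e \<in> excursions n" and t: "t < n"
  shows "cut_excursion n (e, t) \<in> bridge_excursion_pairs n"
    and "glue_excursion n (cut_excursion n (e, t)) = (e, t)"
proof -
  define a where "a = last_zero e t"
  define b where "b = drop t e @ take (t - a) (drop a e)"
  have b: "b \<in> bridges (n - a)" "last_argmax b = n - t"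
    using rotated_excursion_bridge[OF e t] unfolding a_def b_def by auto
  have le: "length e = n" and pe: "\<And>j. psum e j \<le> 0"
    using e by (auto simp: excursions_def)
  have at: "a \<le> t" and pa: "psum e a = 0"
    using last_zero[of e t] unfolding a_def by auto
  have "take a e \<in> excursions a"
    using at t le pa pe by (auto simp: excursions_def psum_take)
  then show "cut_excursion n (e, t) \<in> bridge_excursion_pairs n"
    using b at t by (auto simp: cut_excursion_def bridge_excursion_pairs_def a_def b_def)
  show "glue_excursion n (cut_excursion n (e, t)) = (e, t)"
    using b le at t take_append_take_drop_append_drop[OF at, of e]
    by (simp add: cut_excursion_def glue_excursion_def a_def[symmetric] b_def)
qed

lemma glue_excursion_inverse:
  assumes p: "p \<in> bridge_excursion_pairs n"
  shows "glue_excursion n p \<in> excursions n \<times> {..<n}"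
    and "cut_excursion n (glue_excursion n p) = p"
proof -
  obtain m b e' where p_eq: "p = (m, b, e')" by (cases p)
  have m: "1 \<le> m" "m \<le> n" and b: "b \<in> bridges m" and e': "e' \<in> excursions (n - m)"
    using p by (auto simp: p_eq bridge_excursion_pairs_def)
  define c where "c = last_argmax b"
  have lb: "length b = m" and le': "length e' = n - m"
    using b e' by (auto simp: bridges_def excursions_def)
  have "b \<noteq> []" using lb m by auto
  then have c: "1 \<le> c" "c \<le> m"
    using last_argmax(1,2)[of b] b lb by (auto simp: bridges_def c_def)
  show "glue_excursion n p \<in> excursions n \<times> {..<n}"
    using glued_excursion(1)[OF b m e'] m c by (simp add: p_eq glue_excursion_def c_def[symmetric])
  show "cut_excursion n (glue_excursion n p) = p"
    using glued_excursion(2)[OF b m e'] lb le' m c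
    by (simp add: p_eq glue_excursion_def cut_excursion_def c_def[symmetric])
qed

lemma bij_betw_cut_excursion:
  "bij_betw (cut_excursion n) (excursions n \<times> {..<n}) (bridge_excursion_pairs n)"
  by (rule bij_betw_byWitness[where f' = "glue_excursion n"])
    (use cut_excursion_inverse glue_excursion_inverse in \<open>auto simp: image_subset_iff\<close>)

lemma path_weight_cut_excursion:
  fixes q :: "int \<Rightarrow> 'a::comm_monoid_mult"
  shows "(\<lambda>(m, b, e'). path_weight q b * path_weight q e') (cut_excursion n (e, t)) = path_weight q e"
proof -
  define a where "a = last_zero e t"
  have "take a e @ take (t - a) (drop a e) @ drop t e = e"
    using take_append_take_drop_append_drop[OF last_zero(1)] unfolding a_def .
  then have "path_weight q (take a e) * path_weight q (take (t - a) (drop a e)) * path_weight q (drop t e)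
      = path_weight q e"
    by (metis path_weight_simps(3) mult.assoc)
  then show ?thesis
    by (simp add: cut_excursion_def a_def[symmetric] ac_simps)
qed

lemma excursion_recurrence:
  fixes w :: complex
  assumes w: "w \<noteq> 0" and q: "(\<lambda>i. norm (q i * power_int w i)) summable_on UNIV"
  shows "of_nat n * infsum (path_weight q) (excursions n)
       = (\<Sum>m=1..n. infsum (path_weight q) (bridges m) * infsum (path_weight q) (excursions (n - m)))"
proof -
  have exc: "(\<lambda>d. norm (path_weight q d)) summable_on excursions m" for m
    by (rule summable_on_subset_banach[OF abs_summable_path_weight_fixed_sum[OF w q, of m 0]])
      (auto simp: excursions_def)
  have bri: "(\<lambda>d. norm (path_weight q d)) summable_on bridges m" for m
    by (rule summable_on_subset_banach[OF abs_summable_path_weight_fixed_sum[OF w q, of m 0]])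
      (auto simp: bridges_def)
  let ?h = "\<lambda>(m, b, e'). path_weight q b * path_weight q e'"
  have one: "(\<lambda>t. norm (1::complex)) summable_on {..<n}" by simp
  have h_cut: "?h (cut_excursion n x) = (\<lambda>(e, t). path_weight q e * 1) x" for x
    using path_weight_cut_excursion by (cases x) simp
  have "of_nat n * infsum (path_weight q) (excursions n) = (\<Sum>\<^sub>\<infinity>(e, t)\<in>excursions n \<times> {..<n}. path_weight q e * 1)"
    using infsum_times[OF exc one] by (simp add: mult.commute)
  also have "\<dots> = infsum ?h (bridge_excursion_pairs n)"
    using infsum_reindex_bij_betw[OF bij_betw_cut_excursion, of ?h n] by (simp only: h_cut)
  also have "\<dots> = (\<Sum>\<^sub>\<infinity>m\<in>{1..n}.
      \<Sum>\<^sub>\<infinity>(b, e')\<in>bridges m \<times> excursions (n - m). path_weight q b * path_weight q e')"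
  proof -
    have "(\<lambda>(e, t). path_weight q e * 1) summable_on excursions n \<times> {..<n}"
      by (rule abs_summable_summable)
        (use abs_summable_on_times[OF exc one] in \<open>simp add: case_prod_unfold\<close>)
    then have "?h summable_on bridge_excursion_pairs n"
      using summable_on_reindex_bij_betw[OF bij_betw_cut_excursion, of ?h n] by (simp only: h_cut)
    then show ?thesis
      unfolding bridge_excursion_pairs_def
      using infsum_Sigma'_banach[of "\<lambda>m (b, e'). path_weight q b * path_weight q e'" "{1..n}"]
      by (simp add: case_prod_unfold)
  qed
  also have "\<dots> = (\<Sum>m=1..n. infsum (path_weight q) (bridges m) * infsum (path_weight q) (excursions (n - m)))"
    using infsum_times[OF bri exc] by simp
  finally show ?thesis .
qed

section \<open>Extracting the constant Laurent coefficient\<close>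

lemma has_contour_integral_power_int_circlepath:
  assumes R: "R > 0"
  shows "((\<lambda>w. power_int w k) has_contour_integral (if k = -1 then 2 * of_real pi * \<i> else 0))
           (circlepath 0 R)"
proof (cases "k = -1")
  case True
  have "(\<lambda>w. 1 / (w - 0)) contour_integrable_on circlepath 0 R"
    by (rule contour_integrable_continuous_circlepath) (use R in \<open>auto intro!: continuous_intros\<close>)
  then have "((\<lambda>w. 1 / (w - 0)) has_contour_integral 2 * of_real pi * \<i>) (circlepath 0 R)"
    using has_contour_integral_integral contour_integral_circlepath[OF R, of 0] by fastforce
  then have "((\<lambda>w. power_int w (-1)) has_contour_integral 2 * of_real pi * \<i>) (circlepath 0 R)"
    by (rule has_contour_integral_eq) (use R in \<open>auto simp: power_int_minus field_simps\<close>)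
  then show ?thesis
    using True by simp
next
  case False
  then have k: "of_int (k + 1) \<noteq> (0::complex)"
    by (metis add.commute add_eq_0_iff of_int_eq_0_iff)
  \<comment> \<open>\<open>w powi (k + 1) / (k + 1)\<close> is a primitive on the punctured plane\<close>
  have "((\<lambda>w. power_int w (k + 1) / of_int (k + 1)) has_field_derivative power_int x k) (at x within - {0})"
    if "x \<in> - {0}" for x :: complex
  proof -
    have "((\<lambda>w. power_int w (k + 1)) has_field_derivative of_int (k + 1) * power_int x (k + 1 - 1) * 1)
        (at x within - {0})"
      by (rule DERIV_power_int[OF DERIV_ident]) (use that in auto)
    from DERIV_cdivide[OF this, of "of_int (k + 1)"] show ?thesis
      using k by simp
  qed
  then have "((\<lambda>w. power_int w k) has_contour_integral 0) (circlepath 0 R)"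
    by (rule Cauchy_theorem_primitive) (use R in auto)
  then show ?thesis using False by simp
qed

lemma has_contour_integral_sum_power_int_circlepath:
  fixes c :: "'a \<Rightarrow> complex" and e :: "'a \<Rightarrow> int"
  assumes "R > 0" and "finite X"
  shows "((\<lambda>w. \<Sum>d\<in>X. c d * w powi (e d - 1)) has_contour_integral
           2 * of_real pi * \<i> * (\<Sum>d\<in>X. if e d = 0 then c d else 0)) (circlepath 0 R)"
proof -
  have "((\<lambda>w. \<Sum>d\<in>X. c d * w powi (e d - 1)) has_contour_integral
      (\<Sum>d\<in>X. c d * (if e d - 1 = -1 then 2 * of_real pi * \<i> else 0))) (circlepath 0 R)"
    using assms by (intro has_contour_integral_sum has_contour_integral_lmul
        has_contour_integral_power_int_circlepath)
  then show ?thesis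
    by (simp add: sum_distrib_left mult_ac if_distrib cong: if_cong)
qed

text \<open>The partial sums over finite subsets converge uniformly on the circle, so the series may be
  integrated termwise; only the terms with \<open>e d = 0\<close> contribute.\<close>
lemma has_contour_integral_infsum_power_int_circlepath:
  fixes c :: "'a \<Rightarrow> complex" and e :: "'a \<Rightarrow> int"
  assumes R: "R > 0" and summable: "(\<lambda>d. norm (c d) * R powi e d) summable_on L"
  shows "((\<lambda>w. (\<Sum>\<^sub>\<infinity>d\<in>L. c d * w powi e d) / w) has_contour_integral
           2 * of_real pi * \<i> * (\<Sum>\<^sub>\<infinity>d\<in>{d\<in>L. e d = 0}. c d)) (circlepath 0 R)"
proof -
  define f where "f X w = (\<Sum>d\<in>X. c d * w powi (e d - 1))" for X w
  define l where "l w = (\<Sum>\<^sub>\<infinity>d\<in>L. c d * w powi (e d - 1))" for w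
  define g where "g d = (if e d = 0 then c d else 0)" for d
  have ul: "uniform_limit (sphere 0 R) f l (finite_subsets_at_top L)"
    unfolding f_def l_def
  proof (rule Weierstrass_m_test_general)
    show "(\<lambda>d. norm (c d) * R powi e d / R) summable_on L"
      using summable_on_cmult_left[OF summable, of "inverse R"] by (simp add: divide_inverse)
  qed (use R in \<open>simp add: norm_mult norm_power_int power_int_diff\<close>)
  have f_int: "(f X has_contour_integral 2 * of_real pi * \<i> * sum g X) (circlepath 0 R)"
    if "finite X" for X
    unfolding f_def g_def using R that by (rule has_contour_integral_sum_power_int_circlepath)
  have ev_int: "\<forall>\<^sub>F X in finite_subsets_at_top L. f X contour_integrable_on circlepath 0 R"
    using f_int by (auto simp: contour_integrable_on_def)
  note lim = contour_integral_uniform_limit_circlepath[OF ev_int ul _ R]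
  have "((\<lambda>X. 2 * of_real pi * \<i> * sum g X) \<longlongrightarrow> contour_integral (circlepath 0 R) l)
      (finite_subsets_at_top L)"
  proof (rule Lim_transform_eventually[OF lim(2)])
    show "\<forall>\<^sub>F X in finite_subsets_at_top L.
        contour_integral (circlepath 0 R) (f X) = 2 * of_real pi * \<i> * sum g X"
      using f_int contour_integral_unique by auto
  qed simp
  moreover have "g summable_on L"
    by (rule abs_summable_summable, rule Infinite_Sum.abs_summable_on_comparison_test'[OF summable])
      (use R in \<open>simp add: g_def\<close>)
  then have "((\<lambda>X. 2 * of_real pi * \<i> * sum g X) \<longlongrightarrow> 2 * of_real pi * \<i> * infsum g L)
      (finite_subsets_at_top L)"
    by (intro tendsto_mult_left) (simp add: has_sum_def[symmetric])
  ultimately have "contour_integral (circlepath 0 R) l = 2 * of_real pi * \<i> * infsum g L"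
    by (rule tendsto_unique[OF finite_subsets_at_top_neq_bot])
  also have "infsum g L = (\<Sum>\<^sub>\<infinity>d\<in>{d\<in>L. e d = 0}. c d)"
    by (rule infsum_cong_neutral) (auto simp: g_def)
  finally have "(l has_contour_integral 2 * of_real pi * \<i> * (\<Sum>\<^sub>\<infinity>d\<in>{d\<in>L. e d = 0}. c d))
      (circlepath 0 R)"
    using has_contour_integral_integral[OF lim(1)] by simp
  then show ?thesis
  proof (rule has_contour_integral_eq)
    fix w assume "w \<in> path_image (circlepath 0 R)"
    then have "w \<noteq> 0" using R by auto
    then show "l w = (\<Sum>\<^sub>\<infinity>d\<in>L. c d * w powi e d) / w"
      unfolding l_def divide_inverse infsum_cmult_left'[symmetric]
      by (simp add: power_int_diff field_simps)
  qed
qed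

section \<open>Generating functions\<close>

lemma symbol_power_eq_infsum:
  fixes w :: complex
  assumes w: "w \<noteq> 0" and q: "(\<lambda>i. norm (q i * power_int w i)) summable_on UNIV"
  shows "symbol q w ^ n = (\<Sum>\<^sub>\<infinity>d\<in>{d. length d = n}. path_weight q d * w powi sum_list d)"
  using infsum_prod_list_lists[OF q, of n]
  by (simp add: symbol_def prod_list_weighted_power_int[OF w])

lemma has_contour_integral_symbol_power:
  assumes R: "R > 0" and q: "(\<lambda>i. norm (q i * power_int (of_real R) i)) summable_on UNIV"
  shows "((\<lambda>w. symbol q w ^ n / w) has_contour_integral
           2 * of_real pi * \<i> * infsum (path_weight q) (bridges n)) (circlepath 0 R)"
proof -
  let ?L = "{d::int list. length d = n}"
  have norm_eq: "norm (q i * power_int w i) = norm (q i * power_int (of_real R) i)"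
    if "norm w = R" for w :: complex and i
    using that R by (simp add: norm_mult norm_power_int)
  have "(\<lambda>d. norm (prod_list (map (\<lambda>i. q i * power_int (of_real R) i) d))) summable_on ?L"
    by (rule abs_summable_on_prod_list_lists[OF q])
  then have "(\<lambda>d. norm (path_weight q d) * R powi sum_list d) summable_on ?L"
    using R by (simp add: prod_list_weighted_power_int norm_mult norm_power_int)
  from has_contour_integral_infsum_power_int_circlepath[OF R this]
  have "((\<lambda>w. (\<Sum>\<^sub>\<infinity>d\<in>?L. path_weight q d * w powi sum_list d) / w) has_contour_integral
      2 * of_real pi * \<i> * infsum (path_weight q) (bridges n)) (circlepath 0 R)"
    by (simp add: bridges_def)
  then show ?thesis
  proof (rule has_contour_integral_eq)
    fix w assume "w \<in> path_image (circlepath 0 R)"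
    then have w: "norm w = R" using R by auto
    then have "w \<noteq> 0" using R by auto
    with q show "(\<Sum>\<^sub>\<infinity>d\<in>?L. path_weight q d * w powi sum_list d) / w = symbol q w ^ n / w"
      by (simp add: symbol_power_eq_infsum norm_eq[OF w])
  qed
qed

definition excursion_fps :: "(int \<Rightarrow> complex) \<Rightarrow> complex fps" where
  "excursion_fps q = Abs_fps (\<lambda>n. infsum (path_weight q) (excursions n))"

definition bridge_log_fps :: "(int \<Rightarrow> complex) \<Rightarrow> complex fps" where
  "bridge_log_fps q = Abs_fps (\<lambda>n. if n = 0 then 0 else infsum (path_weight q) (bridges n) / of_nat n)"

lemma toeplitz_pow_00_fps:
  fixes w :: complex
  assumes "w \<noteq> 0" and "(\<lambda>i. norm (q i * power_int w i)) summable_on UNIV"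
  shows "Abs_fps (\<lambda>k. toeplitz_pow q k 0 0) = excursion_fps q"
  by (simp add: excursion_fps_def toeplitz_pow_eq_infsum_walks[OF assms] walks_0_0)

lemma fps_circle_avg_log_part:
  assumes R: "R > 0" and q: "(\<lambda>i. norm (q i * power_int (of_real R) i)) summable_on UNIV"
  shows "fps_circle_avg R (log_part q) = bridge_log_fps q"
proof (rule fps_ext)
  fix n
  show "fps_circle_avg R (log_part q) $ n = bridge_log_fps q $ n"
  proof (cases "n = 0")
    case False
    have "((\<lambda>w. symbol q w ^ n / w / of_nat n) has_contour_integral
        2 * of_real pi * \<i> * infsum (path_weight q) (bridges n) / of_nat n) (circlepath 0 R)"
      by (rule has_contour_integral_div[OF has_contour_integral_symbol_power[OF R q]])
    then have "contour_integral (circlepath 0 R) (\<lambda>w. log_part q w $ n / w)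
        = 2 * of_real pi * \<i> * infsum (path_weight q) (bridges n) / of_nat n"
      using False by (intro contour_integral_unique) (simp add: log_part_def field_simps)
    then show ?thesis
      using False by (simp add: fps_circle_avg_def bridge_log_fps_def)
  qed (simp add: fps_circle_avg_def bridge_log_fps_def log_part_def)
qed

lemma fps_deriv_excursion_fps:
  fixes w :: complex
  assumes "w \<noteq> 0" and "(\<lambda>i. norm (q i * power_int w i)) summable_on UNIV"
  shows "fps_deriv (excursion_fps q) = excursion_fps q * fps_deriv (bridge_log_fps q)"
proof (rule fps_ext)
  fix m
  let ?E = "\<lambda>n. infsum (path_weight q) (excursions n)"
    and ?B = "\<lambda>n. infsum (path_weight q) (bridges n)"
  have "fps_deriv (excursion_fps q) $ m = of_nat (m + 1) * ?E (m + 1)"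
    by (simp add: excursion_fps_def)
  also have "\<dots> = (\<Sum>k=1..m+1. ?B k * ?E (m + 1 - k))"
    by (rule excursion_recurrence[OF assms])
  also have "\<dots> = (\<Sum>i=0..m. ?B (i + 1) * ?E (m - i))"
    using sum.shift_bounds_cl_Suc_ivl[of "\<lambda>k. ?B k * ?E (m + 1 - k)" 0 m] by simp
  also have "\<dots> = (\<Sum>i=0..m. ?B (m - i + 1) * ?E i)"
    by (subst sum.atLeastAtMost_rev) (intro sum.cong refl, simp)
  also have "\<dots> = (excursion_fps q * fps_deriv (bridge_log_fps q)) $ m"
    by (simp add: fps_mult_nth excursion_fps_def bridge_log_fps_def mult.commute del: of_nat_Suc)
  finally show "fps_deriv (excursion_fps q) $ m = (excursion_fps q * fps_deriv (bridge_log_fps q)) $ m" .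
qed

lemma fps_deriv_eq_mult_unique:
  fixes X Y G :: "'a::{idom,ring_char_0} fps"
  assumes X: "fps_deriv X = X * G" and Y: "fps_deriv Y = Y * G" and X0: "X $ 0 = Y $ 0"
  shows "X = Y"
proof (rule fps_ext)
  fix n show "X $ n = Y $ n"
  proof (induction n rule: less_induct)
    case (less n)
    show ?case
    proof (cases n)
      case 0
      then show ?thesis using X0 by simp
    next
      case (Suc m)
      have "of_nat (m + 1) * X $ (m + 1) = (\<Sum>i=0..m. X $ i * G $ (m - i))"
        using arg_cong[OF X, of "\<lambda>F. F $ m"] by (simp add: fps_mult_nth)
      also have "\<dots> = (\<Sum>i=0..m. Y $ i * G $ (m - i))"
        using less Suc by (intro sum.cong refl) auto
      also have "\<dots> = of_nat (m + 1) * Y $ (m + 1)"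
        using arg_cong[OF Y, of "\<lambda>F. F $ m"] by (simp add: fps_mult_nth)
      finally show ?thesis using Suc by (simp del: of_nat_Suc)
    qed
  qed
qed

lemma excursion_fps_eq_exp:
  fixes w :: complex
  assumes "w \<noteq> 0" and "(\<lambda>i. norm (q i * power_int w i)) summable_on UNIV"
  shows "excursion_fps q = fps_exp 1 oo bridge_log_fps q"
proof (rule fps_deriv_eq_mult_unique)
  show "fps_deriv (excursion_fps q) = excursion_fps q * fps_deriv (bridge_log_fps q)"
    by (rule fps_deriv_excursion_fps[OF assms])
  show "fps_deriv (fps_exp 1 oo bridge_log_fps q) = (fps_exp 1 oo bridge_log_fps q) * fps_deriv (bridge_log_fps q)"
    using fps_compose_deriv[of "bridge_log_fps q" "fps_exp 1"] by (simp add: bridge_log_fps_def)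
qed (simp add: excursion_fps_def bridge_log_fps_def excursions_0)

theorem lemma4p1:
  fixes q :: "int \<Rightarrow> complex" and \<epsilon> :: real
  assumes "\<epsilon> > 0"
    and "\<And>w::complex. 1 < norm w \<Longrightarrow> norm w < 1 + \<epsilon> \<Longrightarrow> ((\<lambda>i. norm (q i * power_int w i)) summable_on UNIV)"
  shows "fps_X * Abs_fps (\<lambda>k. toeplitz_pow q k 0 0)
         = fps_X * (fps_exp 1 oo fps_circle_avg (1 + \<epsilon> / 2) (log_part q))"
proof -
  define R where "R = 1 + \<epsilon> / 2"
  have R: "R > 0"
    using assms(1) by (simp add: R_def)
  then have R_ne: "complex_of_real R \<noteq> 0"
    by simp
  have "norm (complex_of_real R) = R"
    using R by simp
  then have q: "(\<lambda>i. norm (q i * power_int (of_real R) i)) summable_on UNIV"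
    using assms(1) by (intro assms(2)) (simp_all add: R_def)
  have "Abs_fps (\<lambda>k. toeplitz_pow q k 0 0) = fps_exp 1 oo fps_circle_avg R (log_part q)"
    by (simp add: toeplitz_pow_00_fps[OF R_ne q] excursion_fps_eq_exp[OF R_ne q]
        fps_circle_avg_log_part[OF R q])
  then show ?thesis
    by (simp add: R_def)
qed

end
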